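(* Run the algorithm BARBAT described in the context. For every epoch $m$ and every arm $k\in[K]$, conditionally on everything that happened before epoch $m$, \[\Pr\left[|r_k^m - \mu_k| \geq \sqrt{\frac{4\ln(4 / \beta_m)}{\widetilde{n}_k^m}} + \frac{2C_m}{N_m}\right] \leq \beta_m,\] where $C_m=\max_{k'\in[K]}\sum_{t=T_{m-1}+1}^{T_m}|\widetilde r_{t,k'}-r_{t,k'}|$.
   Context: Setting. $K\ge2$ arms; in each round $t$ a reward vector $(r_{t,k})_k$ with values in $[0,1]$ is drawn i.i.d. from a fixed unknown distribution with means $\mu_k$; an adversary who sees it produces corrupted rewards $\widetilde r_{t,k}\in[0,1]$ (determined by the history before round $t$ and the round-$t$ reward vector, without knowledge of the agent's round-$t$ choice); the agent pulls $I_t$ and observes $\widetilde r_{t,I_t}$. Algorithm BARBAT. Initialize $T_0=0$, $\Delta_k^0=1$, $r_k^0=0$. For epochs $m=1,2,\dots$: $\zeta_m=(m+4)2^{2(m+4)}\ln K$, $\delta_m=1/(K\zeta_m)$, $\lambda_m=2^8\ln(4K/\delta_m)$, $\beta_m=\delta_m/K$, $n_k^m=\lambda_m(\Delta_k^{m-1})^{-2}$, $N_m=\lceil K\lambda_m2^{2(m-1)}\rceil$, $T_m=T_{m-1}+N_m$; $k_m=\arg\max_kr_k^{m-1}$ (ties by smallest index); $\widetilde n_k^m=n_k^m$ for $k\ne k_m$, $\widetilde n_{k_m}^m=N_m-\sum_{k\ne k_m}n_k^m$. In each round $t=T_{m-1}+1,\dots,T_m$, draw $I_t$ independently with $\Pr[I_t=k]=\widetilde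 n_k^m/N_m$, observe $\widetilde r_{t,I_t}$ and add it to $S_{I_t}^m$ ($S_k^m$ starts at $0$ each epoch). At the end of the epoch: $r_k^m=\min\{S_k^m/\widetilde n_k^m,1\}$, $r_*^m=\max_k\{r_k^m-\sqrt{4\ln(4/\beta_m)/\widetilde n_k^m}\}$, $\Delta_k^m=\max\{2^{-m},r_*^m-r_k^m\}$. *)

theory Defs
  imports "HOL-Probability.Probability"
begin

text \<open>Arms are indexed by 0, ..., K-1. Epoch parameters of BARBAT.\<close>

definition barbat_zeta :: "nat \<Rightarrow> nat \<Rightarrow> real" where
  "barbat_zeta K m = (real m + 4) * 2 ^ (2 * (m + 4)) * ln (real K)"

definition barbat_delta :: "nat \<Rightarrow> nat \<Rightarrow> real" where
  "barbat_delta K m = 1 / (real K * barbat_zeta K m)"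

definition barbat_lambda :: "nat \<Rightarrow> nat \<Rightarrow> real" where
  "barbat_lambda K m = 2 ^ 8 * ln (4 * real K / barbat_delta K m)"

definition barbat_beta :: "nat \<Rightarrow> nat \<Rightarrow> real" where
  "barbat_beta K m = barbat_delta K m / real K"

text \<open>Epoch length N_m (m >= 1).\<close>
definition barbat_N :: "nat \<Rightarrow> nat \<Rightarrow> nat" where
  "barbat_N K m = nat \<lceil>real K * barbat_lambda K m * 2 ^ (2 * (m - 1))\<rceil>"

text \<open>n_k^m, given Delta^{m-1}.\<close>
definition barbat_n :: "nat \<Rightarrow> nat \<Rightarrow> (nat \<Rightarrow> real) \<Rightarrow> nat \<Rightarrow> real" where
  "barbat_n K m Delta k = barbat_lambda K m / (Delta k) ^ 2"

definition barbat_km :: "nat \<Rightarrow> (nat \<Rightarrow> real) \<Rightarrow> nat" where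
  "barbat_km K r = (LEAST k. k < K \<and> (\<forall>j<K. r j \<le> r k))"

text \<open>tilde n_k^m, given Delta^{m-1} and r^{m-1}.\<close>
definition barbat_ntil :: "nat \<Rightarrow> nat \<Rightarrow> (nat \<Rightarrow> real) \<Rightarrow> (nat \<Rightarrow> real) \<Rightarrow> nat \<Rightarrow> real" where
  "barbat_ntil K m Delta r k =
     (if k = barbat_km K r
      then real (barbat_N K m) - (\<Sum>j\<in>{..<K} - {barbat_km K r}. barbat_n K m Delta j)
      else barbat_n K m Delta k)"

text \<open>r_*^m computed at the end of epoch m from the new estimates r' = r^m.\<close>
definition barbat_rstar :: "nat \<Rightarrow> nat \<Rightarrow> (nat \<Rightarrow> real) \<Rightarrow> (nat \<Rightarrow> real) \<Rightarrow> (nat \<Rightarrow> real) \<Rightarrow> real" where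
  "barbat_rstar K m Delta r r' =
     Max ((\<lambda>k. r' k - sqrt (4 * ln (4 / barbat_beta K m) / barbat_ntil K m Delta r k)) ` {..<K})"

text \<open>States (m, Delta^{m-1}, r^{m-1}) at the start of epoch m that the algorithm can reach:
  the initial state, and every state obtained from a reachable one by the end-of-epoch
  update, for any values r^m in [0,1] of the epoch's estimates.\<close>
inductive barbat_reach :: "nat \<Rightarrow> nat \<Rightarrow> (nat \<Rightarrow> real) \<Rightarrow> (nat \<Rightarrow> real) \<Rightarrow> bool"
  for K :: nat where
  init: "barbat_reach K 1 (\<lambda>_. 1) (\<lambda>_. 0)"
| step: "barbat_reach K m Delta r \<Longrightarrow> (\<forall>k<K. r' k \<in> {0..1}) \<Longrightarrow>
         barbat_reach K (Suc m)
           (\<lambda>k. max (1 / 2 ^ m) (barbat_rstar K m Delta r r' - r' k)) r'"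

text \<open>Probability space of one epoch, conditionally on the past: N rounds, in each an
  i.i.d. reward vector (law D) and an independent arm choice (law q).
  A sample point w maps round t < N to the pair (r_t, I_t).\<close>
definition epoch_space :: "nat \<Rightarrow> (nat \<Rightarrow> real) measure \<Rightarrow> nat pmf
     \<Rightarrow> (nat \<Rightarrow> (nat \<Rightarrow> real) \<times> nat) measure" where
  "epoch_space N D q = PiM {..<N} (\<lambda>_. D \<Otimes>\<^sub>M measure_pmf q)"

text \<open>Corrupted reward vector at round t: the adversary sees the history of rounds < t
  (true rewards and choices, hence also the past corrupted rewards) and the round-t
  reward vector, but not the round-t choice.\<close>
definition corrupted ::
  "(nat \<Rightarrow> (nat \<Rightarrow> (nat \<Rightarrow> real) \<times> nat) \<Rightarrow> (nat \<Rightarrow> real) \<Rightarrow> (nat \<Rightarrow> real))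
   \<Rightarrow> nat \<Rightarrow> (nat \<Rightarrow> (nat \<Rightarrow> real) \<times> nat) \<Rightarrow> nat \<Rightarrow> real" where
  "corrupted adv t w = adv t (restrict w {..<t}) (fst (w t))"

definition epoch_S where
  "epoch_S adv N k w = (\<Sum>t<N. if snd (w t) = k then corrupted adv t w k else 0)"

definition epoch_r where
  "epoch_r adv N ntil k w = min (epoch_S adv N k w / ntil) 1"

definition epoch_C where
  "epoch_C adv K N w = Max ((\<lambda>k'. \<Sum>t<N. \<bar>corrupted adv t w k' - fst (w t) k'\<bar>) ` {..<K})"

end

theory Submission
  imports Defs
begin

text \<open>Let p = ntil_k / N be the probability of pulling arm k in each round of the epoch and
  consider the increments Z_t = (1[I_t = k] - p) rtilde_{t,k} + p (r_{t,k} - mu_k). Since the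
  adversary fixes rtilde_t before I_t is drawn, each Z_t has conditional moment generating function
  at most exp(l^2 p) for |l| <= 1/2, so the product structure of the epoch gives
  E exp(l sum_t Z_t) <= exp(l^2 ntil), and Chernoff's inequality yields
  P(|sum_t Z_t| >= eps ntil) <= 2 exp(-eps^2 ntil / 4). On the other hand S_k - ntil mu_k differs
  from sum_t Z_t by p times the total corruption of arm k, which is at most p C. Finally
  ntil >= lambda = 256 ln(4/beta) along every run of the algorithm, so
  eps = sqrt(4 ln(4/beta) / ntil) is at most 1 and the bound becomes beta/2.\<close>

section \<open>Parameters of BARBAT\<close>

lemma barbat_zeta_ge_1:
  assumes "2 \<le> K"
  shows "1 \<le> barbat_zeta K m"
proof -
  have "1 / 2 \<le> ln (2::real)"
    using ln_add1_ge[of 1] by simp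
  also have "\<dots> \<le> ln (real K)"
    using assms by simp
  finally have "4 * 1 * (1 / 2) \<le> (real m + 4) * 2 ^ (2 * (m + 4)) * ln (real K)"
    by (intro mult_mono) auto
  then show ?thesis
    by (simp add: barbat_zeta_def)
qed

lemma barbat_beta_pos:
  assumes "2 \<le> K"
  shows "0 < barbat_beta K m"
  using barbat_zeta_ge_1[OF assms, of m] assms by (simp add: barbat_beta_def barbat_delta_def)

lemma barbat_beta_less_1:
  assumes "2 \<le> K"
  shows "barbat_beta K m < 1"
proof -
  have "2 * 2 * 1 \<le> real K * real K * barbat_zeta K m"
    using barbat_zeta_ge_1[OF assms] assms by (intro mult_mono) auto
  then show ?thesis
    by (simp add: barbat_beta_def barbat_delta_def field_simps)
qed

lemma ln_four_div_barbat_beta_pos: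
  assumes "2 \<le> K"
  shows "0 < ln (4 / barbat_beta K m)"
  using barbat_beta_pos[OF assms, of m] barbat_beta_less_1[OF assms, of m] by simp

lemma barbat_lambda_eq:
  assumes "2 \<le> K"
  shows "barbat_lambda K m = 2 ^ 8 * ln (4 / barbat_beta K m)"
  using assms barbat_beta_pos[OF assms]
  by (simp add: barbat_lambda_def barbat_beta_def field_simps)

lemma barbat_lambda_pos:
  assumes "2 \<le> K"
  shows "0 < barbat_lambda K m"
  using barbat_lambda_eq[OF assms] ln_four_div_barbat_beta_pos[OF assms, of m] by simp

lemma barbat_N_pos:
  assumes "2 \<le> K"
  shows "0 < barbat_N K m"
proof -
  have "0 < real K * barbat_lambda K m * 2 ^ (2 * (m - 1))"
    using assms barbat_lambda_pos[OF assms] by simp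
  then show ?thesis
    using real_nat_ceiling_ge by (simp add: barbat_N_def)
qed

lemma barbat_n_bounds:
  assumes "0 \<le> barbat_lambda K m" and "1 / 2 ^ (m - 1) \<le> Delta j" and "Delta j \<le> 1"
  shows "barbat_lambda K m \<le> barbat_n K m Delta j"
    and "barbat_n K m Delta j \<le> barbat_lambda K m * 2 ^ (2 * (m - 1))"
proof -
  have pos: "0 < Delta j"
    using assms(2) by (auto intro: less_le_trans[of _ "1 / 2 ^ (m - 1)"])
  have "(Delta j)\<^sup>2 \<le> 1"
    using pos assms(3) by (simp add: abs_square_le_1)
  from mult_left_le[OF this assms(1)] show "barbat_lambda K m \<le> barbat_n K m Delta j"
    using pos by (simp add: barbat_n_def field_simps)
  have "1 \<le> 2 ^ (m - 1) * Delta j"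
    using assms(2) by (simp add: field_simps)
  then have "1 \<le> (2 ^ (m - 1) * Delta j)\<^sup>2"
    by (rule one_le_power)
  then have "1 / (Delta j)\<^sup>2 \<le> (2 ^ (m - 1))\<^sup>2"
    using pos by (simp add: field_simps power_mult_distrib)
  then have "1 / (Delta j)\<^sup>2 \<le> 2 ^ (2 * (m - 1))"
    by (simp only: power_even_eq)
  from mult_left_mono[OF this assms(1)] show "barbat_n K m Delta j \<le> barbat_lambda K m * 2 ^ (2 * (m - 1))"
    by (simp add: barbat_n_def)
qed

lemma barbat_lambda_le_ntil:
  assumes K: "2 \<le> K" and Delta: "\<forall>j<K. 1 / 2 ^ (m - 1) \<le> Delta j \<and> Delta j \<le> 1" and k: "k < K"
  shows "barbat_lambda K m \<le> barbat_ntil K m Delta r k"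
proof (cases "k = barbat_km K r")
  case False
  then show ?thesis
    using barbat_n_bounds(1)[OF less_imp_le[OF barbat_lambda_pos[OF K]]] Delta k
    by (simp add: barbat_ntil_def)
next
  case True
  define B where "B = barbat_lambda K m * 2 ^ (2 * (m - 1))"
  have lam: "0 \<le> barbat_lambda K m"
    using barbat_lambda_pos[OF K] by (rule less_imp_le)
  have "(\<Sum>j\<in>{..<K} - {k}. barbat_n K m Delta j) \<le> real (card ({..<K} - {k})) * B"
    using barbat_n_bounds(2)[OF lam] Delta by (intro sum_bounded_above) (auto simp: B_def)
  also have "\<dots> = real K * B - B"
    using k by (simp add: of_nat_diff algebra_simps)
  also have "\<dots> \<le> real (barbat_N K m) - B"
    using real_nat_ceiling_ge by (simp add: B_def barbat_N_def mult.assoc)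
  finally have "(\<Sum>j\<in>{..<K} - {k}. barbat_n K m Delta j) \<le> real (barbat_N K m) - B" .
  moreover have "barbat_lambda K m * 1 \<le> B"
    unfolding B_def using lam by (intro mult_left_mono) simp_all
  ultimately show ?thesis
    using True by (simp add: barbat_ntil_def)
qed

text \<open>The square roots in r_* must be taken of nonnegative numbers (sqrt is negative on negative
  reals), which is why the lower bound on ntil is needed here.\<close>
lemma barbat_rstar_le_1:
  assumes K: "2 \<le> K" and Delta: "\<forall>j<K. 1 / 2 ^ (m - 1) \<le> Delta j \<and> Delta j \<le> 1"
    and r': "\<forall>j<K. r' j \<in> {0..1}"
  shows "barbat_rstar K m Delta r r' \<le> 1"
  unfolding barbat_rstar_def
proof (rule Max.boundedI)
  show "(\<lambda>j. r' j - sqrt (4 * ln (4 / barbat_beta K m) / barbat_ntil K m Delta r j)) ` {..<K} \<noteq> {}"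
    using K by (simp add: lessThan_empty_iff)
  fix x
  assume "x \<in> (\<lambda>j. r' j - sqrt (4 * ln (4 / barbat_beta K m) / barbat_ntil K m Delta r j)) ` {..<K}"
  then obtain j where j: "j < K"
    and x: "x = r' j - sqrt (4 * ln (4 / barbat_beta K m) / barbat_ntil K m Delta r j)"
    by auto
  have "0 < barbat_ntil K m Delta r j"
    using barbat_lambda_le_ntil[OF K Delta j, of r] barbat_lambda_pos[OF K, of m] by linarith
  then have "0 \<le> sqrt (4 * ln (4 / barbat_beta K m) / barbat_ntil K m Delta r j)"
    using ln_four_div_barbat_beta_pos[OF K, of m] by simp
  moreover have "r' j \<le> 1"
    using r' j by simp
  ultimately show "x \<le> 1"
    using x by linarith
qed simp

lemma barbat_reach_Delta_bounds:
  assumes "barbat_reach K m Delta r" and K: "2 \<le> K"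
  shows "\<forall>j<K. 1 / 2 ^ (m - 1) \<le> Delta j \<and> Delta j \<le> 1"
  using assms(1)
proof (induction rule: barbat_reach.induct)
  case init
  then show ?case by simp
next
  case (step m Delta r r')
  show ?case
  proof (intro allI impI)
    fix j
    assume "j < K"
    then have "0 \<le> r' j"
      using step.hyps(2) by simp
    then show "1 / 2 ^ (Suc m - 1) \<le> max (1 / 2 ^ m) (barbat_rstar K m Delta r r' - r' j)
               \<and> max (1 / 2 ^ m) (barbat_rstar K m Delta r r' - r' j) \<le> 1"
      using barbat_rstar_le_1[OF K step.IH step.hyps(2), of r] by simp
  qed
qed

section \<open>Exponential moments of adapted sums\<close>

lemma nn_integral_PiM_exp_sum_Suc_le:
  fixes M :: "'a measure" and Y :: "nat \<Rightarrow> (nat \<Rightarrow> 'a) \<Rightarrow> real"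
  assumes M: "prob_space M" and n: "n < N"
    and measurable: "\<And>t. t \<le> n \<Longrightarrow> Y t \<in> borel_measurable (PiM {..<N} (\<lambda>_. M))"
    and adapted: "\<And>t w. t < n \<Longrightarrow> Y t w = Y t (restrict w {..t})"
    and step: "\<And>w. w \<in> space (PiM {..<N} (\<lambda>_. M)) \<Longrightarrow> (\<integral>\<^sup>+ x. exp (Y n (w(n := x))) \<partial>M) \<le> ennreal c"
  shows "(\<integral>\<^sup>+ w. exp (\<Sum>t<Suc n. Y t w) \<partial>PiM {..<N} (\<lambda>_. M))
         \<le> (\<integral>\<^sup>+ w. exp (\<Sum>t<n. Y t w) \<partial>PiM {..<N} (\<lambda>_. M)) * ennreal c"
proof -
  interpret M: prob_space M by (rule M)
  interpret PS: product_prob_space "\<lambda>_. M" by unfold_locales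
  let ?\<Omega> = "PiM {..<N} (\<lambda>_. M)"
  define J where "J = {..<N} - {n}"
  have N: "{..<N} = insert n J" "n \<notin> J" "finite J"
    using n by (auto simp: J_def)
  obtain x0 where x0: "x0 \<in> space M"
    using M.not_empty by blast
  have upd: "(\<lambda>x. w(n := x)) \<in> measurable M ?\<Omega>" if "w \<in> space (PiM J (\<lambda>_. M))" for w
    using measurable_fun_upd[of "{..<N}" J n, OF _ measurable_const[OF that] measurable_id] N by auto
  have upd_x0: "(\<lambda>w. w(n := x0)) \<in> measurable (PiM J (\<lambda>_. M)) ?\<Omega>"
    using measurable_fun_upd[of "{..<N}" J n, OF _ measurable_id measurable_const[OF x0]] N by auto
  have split: "(\<integral>\<^sup>+ w. f w \<partial>?\<Omega>) = (\<integral>\<^sup>+ w. \<integral>\<^sup>+ x. f (w(n := x)) \<partial>M \<partial>PiM J (\<lambda>_. M))"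
    if "f \<in> borel_measurable ?\<Omega>" for f
    using PS.product_nn_integral_insert[OF N(3,2), of f] that unfolding N(1) by simp
  have exp_sum_measurable: "(\<lambda>w. ennreal (exp (\<Sum>t<i. Y t w))) \<in> borel_measurable ?\<Omega>" if "i \<le> Suc n" for i
  proof -
    have "(\<lambda>w. \<Sum>t<i. Y t w) \<in> borel_measurable ?\<Omega>"
      using measurable that by (intro borel_measurable_sum) auto
    then show ?thesis
      by measurable
  qed
  \<comment> \<open>The rounds before n do not see coordinate n, so they can be evaluated at x0.\<close>
  define past where "past w = (\<Sum>t<n. Y t (w(n := x0)))" for w
  have past: "(\<Sum>t<n. Y t (w(n := x))) = past w" for w x
    unfolding past_def
  proof (intro sum.cong refl)
    fix t assume t: "t \<in> {..<n}"
    then have "restrict (w(n := x)) {..t} = restrict (w(n := x0)) {..t}"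
      by (auto simp: restrict_def)
    then show "Y t (w(n := x)) = Y t (w(n := x0))"
      using adapted t by (metis lessThan_iff)
  qed
  have "(\<integral>\<^sup>+ w. exp (\<Sum>t<Suc n. Y t w) \<partial>?\<Omega>)
      = (\<integral>\<^sup>+ w. \<integral>\<^sup>+ x. ennreal (exp (past w)) * exp (Y n (w(n := x))) \<partial>M \<partial>PiM J (\<lambda>_. M))"
    using exp_sum_measurable[of "Suc n"] by (simp add: split past exp_add ennreal_mult')
  also have "\<dots> = (\<integral>\<^sup>+ w. exp (past w) * \<integral>\<^sup>+ x. exp (Y n (w(n := x))) \<partial>M \<partial>PiM J (\<lambda>_. M))"
    using measurable[of n] upd
    by (intro nn_integral_cong nn_integral_cmult) (auto intro!: measurable_compose[OF _ borel_measurable_exp])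
  also have "\<dots> \<le> (\<integral>\<^sup>+ w. exp (past w) * ennreal c \<partial>PiM J (\<lambda>_. M))"
  proof (intro nn_integral_mono mult_left_mono)
    fix w assume "w \<in> space (PiM J (\<lambda>_. M))"
    from step[OF measurable_space[OF upd_x0 this]]
    show "(\<integral>\<^sup>+ x. exp (Y n (w(n := x))) \<partial>M) \<le> ennreal c"
      by simp
  qed simp
  also have "\<dots> = (\<integral>\<^sup>+ w. exp (past w) \<partial>PiM J (\<lambda>_. M)) * ennreal c"
    using measurable_compose[OF upd_x0 exp_sum_measurable[of n]]
    by (intro nn_integral_multc) (simp add: past_def)
  also have "(\<integral>\<^sup>+ w. exp (past w) \<partial>PiM J (\<lambda>_. M)) = (\<integral>\<^sup>+ w. exp (\<Sum>t<n. Y t w) \<partial>?\<Omega>)"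
    using exp_sum_measurable[of n] by (simp add: split past M.emeasure_space_1)
  finally show ?thesis .
qed

lemma nn_integral_PiM_exp_sum_adapted_le:
  fixes M :: "'a measure" and Y :: "nat \<Rightarrow> (nat \<Rightarrow> 'a) \<Rightarrow> real"
  assumes M: "prob_space M"
    and measurable: "\<And>t. t < N \<Longrightarrow> Y t \<in> borel_measurable (PiM {..<N} (\<lambda>_. M))"
    and adapted: "\<And>t w. t < N \<Longrightarrow> Y t w = Y t (restrict w {..t})"
    and step: "\<And>t w. t < N \<Longrightarrow> w \<in> space (PiM {..<N} (\<lambda>_. M)) \<Longrightarrow>
                 (\<integral>\<^sup>+ x. exp (Y t (w(t := x))) \<partial>M) \<le> ennreal c"
  shows "(\<integral>\<^sup>+ w. exp (\<Sum>t<N. Y t w) \<partial>PiM {..<N} (\<lambda>_. M)) \<le> ennreal c ^ N"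
proof -
  interpret \<Omega>: prob_space "PiM {..<N} (\<lambda>_. M)"
    by (rule prob_space_PiM) (rule M)
  have "(\<integral>\<^sup>+ w. exp (\<Sum>t<n. Y t w) \<partial>PiM {..<N} (\<lambda>_. M)) \<le> ennreal c ^ n" if "n \<le> N" for n
    using that
  proof (induction n)
    case 0
    show ?case
      by (simp add: \<Omega>.emeasure_space_1)
  next
    case (Suc n)
    have "(\<integral>\<^sup>+ w. exp (\<Sum>t<Suc n. Y t w) \<partial>PiM {..<N} (\<lambda>_. M))
        \<le> (\<integral>\<^sup>+ w. exp (\<Sum>t<n. Y t w) \<partial>PiM {..<N} (\<lambda>_. M)) * ennreal c"
      using Suc.prems by (intro nn_integral_PiM_exp_sum_Suc_le M measurable adapted step) auto
    also have "\<dots> \<le> ennreal c ^ n * ennreal c"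
      using Suc by (intro mult_right_mono) auto
    finally show ?case
      by (simp add: mult.commute)
  qed
  then show ?thesis
    by simp
qed

lemma exp_le_1_plus_x_plus_sq:
  fixes x :: real
  assumes "\<bar>x\<bar> \<le> 1"
  shows "exp x \<le> 1 + x + x\<^sup>2"
proof (cases "0 \<le> x")
  case True
  then show ?thesis
    using exp_bound assms by simp
next
  case False
  define y where "y = - x"
  have y: "0 \<le> y" "y \<le> 1"
    using False assms by (auto simp: y_def)
  have "1 \<le> (1 - y + y\<^sup>2) * (1 + y + y\<^sup>2 / 2)"
  proof -
    have "(1 - y + y\<^sup>2) * (1 + y + y\<^sup>2 / 2) = 1 + y\<^sup>2 / 2 + y ^ 3 / 2 + y ^ 4 / 2"
      by (simp add: power2_eq_square power3_eq_cube power4_eq_xxxx field_simps)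
    then show ?thesis
      using y by simp
  qed
  also have "\<dots> \<le> (1 - y + y\<^sup>2) * exp y"
  proof (rule mult_left_mono)
    show "1 + y + y\<^sup>2 / 2 \<le> exp y"
      using y by (intro exp_lower_Taylor_quadratic) simp
    have "0 \<le> (y - 1 / 2)\<^sup>2 + 3 / 4"
      by simp
    then show "0 \<le> 1 - y + y\<^sup>2"
      by (simp add: power2_eq_square algebra_simps)
  qed
  finally show ?thesis
    by (simp add: y_def exp_minus field_simps)
qed

lemma two_point_mgf_le:
  fixes p a b l :: real
  assumes p: "0 \<le> p" "p \<le> 1" and a: "0 \<le> a" "a \<le> 1" and b: "\<bar>b\<bar> \<le> p" and l: "\<bar>l\<bar> \<le> 1 / 2"
  shows "exp (l * ((1 - p) * a + b)) * p + exp (l * (- p * a + b)) * (1 - p) \<le> 1 + l * b + l\<^sup>2 * p"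
proof -
  define x1 where "x1 = l * ((1 - p) * a + b)"
  define x0 where "x0 = l * (- p * a + b)"
  have "\<bar>(1 - p) * a\<bar> \<le> 1" "\<bar>- p * a\<bar> \<le> 1"
    using p a by (auto simp: abs_mult intro: mult_le_one)
  then have "\<bar>(1 - p) * a + b\<bar> \<le> 2" "\<bar>- p * a + b\<bar> \<le> 2"
    using b p by linarith+
  then have "\<bar>l\<bar> * \<bar>(1 - p) * a + b\<bar> \<le> 1 / 2 * 2" "\<bar>l\<bar> * \<bar>- p * a + b\<bar> \<le> 1 / 2 * 2"
    using l by (intro mult_mono; simp)+
  then have "\<bar>x1\<bar> \<le> 1" "\<bar>x0\<bar> \<le> 1"
    by (simp_all add: x1_def x0_def abs_mult)
  then have "exp x1 \<le> 1 + x1 + x1\<^sup>2" "exp x0 \<le> 1 + x0 + x0\<^sup>2"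
    by (auto intro: exp_le_1_plus_x_plus_sq)
  then have "exp x1 * p + exp x0 * (1 - p) \<le> (1 + x1 + x1\<^sup>2) * p + (1 + x0 + x0\<^sup>2) * (1 - p)"
    using p by (intro add_mono mult_right_mono) auto
  also have "\<dots> = 1 + l * b + l\<^sup>2 * (p * (1 - p) * a\<^sup>2 + b\<^sup>2)"
    by (simp add: x1_def x0_def algebra_simps power2_eq_square)
  also have "\<dots> \<le> 1 + l * b + l\<^sup>2 * p"
  proof -
    have "p * (1 - p) * a\<^sup>2 \<le> p * (1 - p)"
      using p a by (intro mult_left_le) (auto simp: abs_square_le_1)
    moreover have "b\<^sup>2 \<le> p\<^sup>2"
      using b by (metis abs_le_square_iff abs_of_nonneg abs_ge_zero order.trans)
    ultimately have "p * (1 - p) * a\<^sup>2 + b\<^sup>2 \<le> p"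
      by (simp add: power2_eq_square algebra_simps)
    then show ?thesis
      by (simp add: mult_left_mono)
  qed
  finally show ?thesis
    by (simp add: x1_def x0_def)
qed

lemma nn_integral_pmf_two_valued:
  fixes q :: "'a pmf" and e1 e0 :: real
  assumes "0 \<le> e1" "0 \<le> e0"
  shows "(\<integral>\<^sup>+ i. ennreal (if i = k then e1 else e0) \<partial>measure_pmf q) = e1 * pmf q k + e0 * (1 - pmf q k)"
proof -
  have "(\<integral>\<^sup>+ i. ennreal (if i = k then e1 else e0) \<partial>measure_pmf q)
      = (\<integral>\<^sup>+ i. ennreal e1 * indicator {k} i + ennreal e0 * indicator (- {k}) i \<partial>measure_pmf q)"
    by (rule nn_integral_cong) (auto simp: indicator_def)
  also have "\<dots> = ennreal e1 * pmf q k + ennreal e0 * measure_pmf.prob q (- {k})"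
    by (simp add: nn_integral_add nn_integral_cmult_indicator measure_pmf.emeasure_eq_measure measure_pmf_single)
  also have "measure_pmf.prob q (- {k}) = 1 - pmf q k"
    using measure_pmf.prob_compl[of "{k}" q] by (simp add: measure_pmf_single Compl_eq_Diff_UNIV)
  finally show ?thesis
    using assms by (simp add: ennreal_mult ennreal_plus pmf_le_1)
qed

lemma (in prob_space) integrable_unit_interval:
  fixes X :: "'a \<Rightarrow> real"
  assumes "X \<in> borel_measurable M" and "AE x in M. X x \<in> {0..1}"
  shows "integrable M X"
proof -
  have "AE x in M. norm (X x) \<le> 1"
    using assms(2) by eventually_elim auto
  then show ?thesis
    using assms(1) by (rule integrable_const_bound)
qed

lemma (in prob_space) expectation_in_unit_interval:
  fixes X :: "'a \<Rightarrow> real"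
  assumes "X \<in> borel_measurable M" and "AE x in M. X x \<in> {0..1}"
  shows "expectation X \<in> {0..1}"
  using integrable_unit_interval[OF assms] assms(2) by (auto intro: integral_ge_const integral_le_const)

lemma nn_integral_pmf_exp_increment_le:
  fixes q :: "'a pmf"
  assumes a: "0 \<le> a" "a \<le> 1" and b: "\<bar>b\<bar> \<le> pmf q k" and l: "\<bar>l\<bar> \<le> 1 / 2"
  shows "(\<integral>\<^sup>+ i. exp (l * ((of_bool (i = k) - pmf q k) * a + b)) \<partial>measure_pmf q)
         \<le> 1 + l * b + l\<^sup>2 * pmf q k"
proof -
  have "(\<integral>\<^sup>+ i. exp (l * ((of_bool (i = k) - pmf q k) * a + b)) \<partial>measure_pmf q)
      = (\<integral>\<^sup>+ i. ennreal (if i = k then exp (l * ((1 - pmf q k) * a + b))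
                                 else exp (l * (- pmf q k * a + b))) \<partial>measure_pmf q)"
    by (intro nn_integral_cong) simp
  also have "\<dots> = exp (l * ((1 - pmf q k) * a + b)) * pmf q k + exp (l * (- pmf q k * a + b)) * (1 - pmf q k)"
    by (simp add: nn_integral_pmf_two_valued)
  also have "\<dots> \<le> 1 + l * b + l\<^sup>2 * pmf q k"
    using two_point_mgf_le[OF pmf_nonneg pmf_le_1 a b l] by (rule ennreal_leI)
  finally show ?thesis .
qed

lemma nn_integral_exp_round_increment_le:
  fixes D :: "'b measure" and q :: "'c pmf" and g X :: "'b \<Rightarrow> real"
  assumes D: "prob_space D"
    and g: "g \<in> borel_measurable D" "\<And>r. g r \<in> {0..1}"
    and X: "X \<in> borel_measurable D" "AE r in D. X r \<in> {0..1}"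
    and l: "\<bar>l\<bar> \<le> 1 / 2"
  shows "(\<integral>\<^sup>+ x. exp (l * ((of_bool (snd x = k) - pmf q k) * g (fst x)
                          + pmf q k * (X (fst x) - (\<integral>r. X r \<partial>D)))) \<partial>(D \<Otimes>\<^sub>M measure_pmf q))
         \<le> exp (l\<^sup>2 * pmf q k)"
proof -
  interpret D: prob_space D by (rule D)
  define p where "p = pmf q k"
  define \<mu> where "\<mu> = (\<integral>r. X r \<partial>D)"
  define \<psi> where "\<psi> r = 1 + l * (p * (X r - \<mu>)) + l\<^sup>2 * p" for r
  have p: "0 \<le> p" "p \<le> 1"
    by (simp_all add: p_def pmf_le_1)
  have \<mu>: "0 \<le> \<mu>" "\<mu> \<le> 1"
    using D.expectation_in_unit_interval[OF X] by (simp_all add: \<mu>_def)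
  have Xint: "integrable D X"
    using D.integrable_unit_interval[OF X] .
  have centred: "\<bar>p * (X r - \<mu>)\<bar> \<le> p" if "X r \<in> {0..1}" for r
    using that \<mu> p by (auto simp: abs_mult intro!: mult_left_le)
  have "(\<integral>\<^sup>+ x. exp (l * ((of_bool (snd x = k) - p) * g (fst x) + p * (X (fst x) - \<mu>))) \<partial>(D \<Otimes>\<^sub>M measure_pmf q))
      = (\<integral>\<^sup>+ r. \<integral>\<^sup>+ i. exp (l * ((of_bool (i = k) - p) * g r + p * (X r - \<mu>))) \<partial>measure_pmf q \<partial>D)"
    using g(1) X(1) by (subst measure_pmf.nn_integral_fst[symmetric]) (simp_all add: case_prod_unfold)
  also have "\<dots> \<le> (\<integral>\<^sup>+ r. \<psi> r \<partial>D)"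
  proof (rule nn_integral_mono_AE)
    show "AE r in D. (\<integral>\<^sup>+ i. exp (l * ((of_bool (i = k) - p) * g r + p * (X r - \<mu>))) \<partial>measure_pmf q) \<le> \<psi> r"
      using X(2)
    proof eventually_elim
      case (elim r)
      show ?case
        using g(2)[of r] nn_integral_pmf_exp_increment_le[of "g r" "p * (X r - \<mu>)" q k l]
          centred[OF elim] l by (simp add: \<psi>_def p_def)
    qed
  qed
  also have "\<dots> = ennreal (\<integral>r. \<psi> r \<partial>D)"
  proof (rule nn_integral_eq_integral)
    show "integrable D \<psi>"
      using Xint unfolding \<psi>_def by (intro Bochner_Integration.integrable_add) auto
    show "AE r in D. 0 \<le> \<psi> r"
      using X(2)
    proof eventually_elim
      case (elim r)
      have "\<bar>l * (p * (X r - \<mu>))\<bar> \<le> 1 / 2 * 1"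
        using centred[OF elim] p l unfolding abs_mult by (intro mult_mono) auto
      then have "- (l * (p * (X r - \<mu>))) \<le> 1 / 2 * 1"
        by (rule abs_le_D2)
      moreover have "0 \<le> l\<^sup>2 * p"
        using p by simp
      ultimately show ?case
        unfolding \<psi>_def by linarith
    qed
  qed
  also have "(\<integral>r. \<psi> r \<partial>D) = 1 + l\<^sup>2 * p"
    using Xint by (simp add: \<psi>_def \<mu>_def D.prob_space)
  also have "ennreal (1 + l\<^sup>2 * p) \<le> exp (l\<^sup>2 * p)"
    using p by (intro ennreal_leI exp_ge_add_one_self_aux) auto
  finally show ?thesis
    by (simp add: p_def \<mu>_def)
qed

section \<open>Concentration of the estimates within one epoch\<close>

lemma corruption_le_epoch_C:
  assumes "k < K"
  shows "\<bar>\<Sum>t<N. corrupted adv t w k - fst (w t) k\<bar> \<le> epoch_C adv K N w"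
proof -
  have "\<bar>\<Sum>t<N. corrupted adv t w k - fst (w t) k\<bar> \<le> (\<Sum>t<N. \<bar>corrupted adv t w k - fst (w t) k\<bar>)"
    by (rule sum_abs)
  also have "\<dots> \<le> epoch_C adv K N w"
    unfolding epoch_C_def using assms by (intro Max_ge) auto
  finally show ?thesis .
qed

locale corrupted_epoch =
  fixes D :: "(nat \<Rightarrow> real) measure" and q :: "nat pmf"
    and adv :: "nat \<Rightarrow> (nat \<Rightarrow> (nat \<Rightarrow> real) \<times> nat) \<Rightarrow> (nat \<Rightarrow> real) \<Rightarrow> (nat \<Rightarrow> real)"
    and N k :: nat
  assumes prob_space_D: "prob_space D"
    and reward_measurable: "(\<lambda>x. x k) \<in> borel_measurable D"
    and reward_range: "AE x in D. x k \<in> {0..1}"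
    and corrupted_range: "\<And>t h x. adv t h x k \<in> {0..1}"
    and corrupted_measurable: "\<And>t. t < N \<Longrightarrow> (\<lambda>w. corrupted adv t w k) \<in> borel_measurable (epoch_space N D q)"
begin

definition increment :: "nat \<Rightarrow> (nat \<Rightarrow> (nat \<Rightarrow> real) \<times> nat) \<Rightarrow> real" where
  "increment t w = (of_bool (snd (w t) = k) - pmf q k) * corrupted adv t w k
                   + pmf q k * (fst (w t) k - (\<integral>x. x k \<partial>D))"

lemma increment_adapted: "increment t w = increment t (restrict w {..t})"
proof -
  have "restrict (restrict w {..t}) {..<t} = restrict w {..<t}"
    by (auto simp: restrict_def)
  then show ?thesis
    by (simp add: increment_def corrupted_def)
qed

lemma prob_space_round: "prob_space (D \<Otimes>\<^sub>M measure_pmf q)"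
  using prob_space_D by (intro prob_space_pair) (auto intro: measure_pmf.prob_space_axioms)

lemma prob_space_epoch: "prob_space (epoch_space N D q)"
  unfolding epoch_space_def by (intro prob_space_PiM prob_space_round)

lemma increment_measurable:
  assumes "t < N"
  shows "increment t \<in> borel_measurable (epoch_space N D q)"
proof -
  have round: "(\<lambda>w. w t) \<in> measurable (epoch_space N D q) (D \<Otimes>\<^sub>M measure_pmf q)"
    using assms by (simp add: epoch_space_def)
  have "(\<lambda>w. fst (w t) k) \<in> borel_measurable (epoch_space N D q)"
    using measurable_compose[OF measurable_compose[OF round measurable_fst] reward_measurable] by simp
  moreover have "(\<lambda>w. snd (w t)) \<in> measurable (epoch_space N D q) (count_space UNIV)"
    using measurable_compose[OF round measurable_snd] by simp
  ultimately show ?thesis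
    unfolding increment_def using corrupted_measurable[OF assms] by measurable
qed

lemma increment_mgf_le:
  assumes t: "t < N" and w: "w \<in> space (epoch_space N D q)" and l: "\<bar>l\<bar> \<le> 1 / 2"
  shows "(\<integral>\<^sup>+ x. exp (l * increment t (w(t := x))) \<partial>(D \<Otimes>\<^sub>M measure_pmf q)) \<le> exp (l\<^sup>2 * pmf q k)"
proof -
  define g where "g r = adv t (restrict w {..<t}) r k" for r
  have upd: "(\<lambda>x. w(t := x)) \<in> measurable (D \<Otimes>\<^sub>M measure_pmf q) (epoch_space N D q)"
    using measurable_fun_upd[of "{..<N}" "{..<N}" t, OF _ measurable_const[OF w[unfolded epoch_space_def]] measurable_id] t
    by (auto simp: epoch_space_def)
  have corrupted_upd: "corrupted adv t (w(t := x)) k = g (fst x)" for x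
    by (simp add: corrupted_def g_def)
  have "(\<lambda>x. g (fst x)) \<in> borel_measurable (D \<Otimes>\<^sub>M measure_pmf q)"
    using measurable_compose[OF upd corrupted_measurable[OF t]] by (simp add: corrupted_upd)
  from measurable_Pair1[OF this, of undefined] have "g \<in> borel_measurable D"
    by simp
  from nn_integral_exp_round_increment_le[OF prob_space_D this _ reward_measurable reward_range l, of q k]
  show ?thesis
    using corrupted_range by (simp add: increment_def corrupted_upd g_def)
qed

lemma increment_sum_mgf_le:
  assumes "\<bar>l\<bar> \<le> 1 / 2"
  shows "(\<integral>\<^sup>+ w. exp (l * (\<Sum>t<N. increment t w)) \<partial>epoch_space N D q) \<le> exp (l\<^sup>2 * pmf q k * N)"
proof -
  have "(\<integral>\<^sup>+ w. exp (\<Sum>t<N. l * increment t w) \<partial>epoch_space N D q) \<le> ennreal (exp (l\<^sup>2 * pmf q k)) ^ N"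
    unfolding epoch_space_def
  proof (rule nn_integral_PiM_exp_sum_adapted_le[OF prob_space_round])
    show "(\<lambda>w. l * increment t w) \<in> borel_measurable (PiM {..<N} (\<lambda>_. D \<Otimes>\<^sub>M measure_pmf q))" if "t < N" for t
      using increment_measurable[OF that] by (simp add: epoch_space_def)
    show "l * increment t w = l * increment t (restrict w {..t})" for t w
      using increment_adapted by simp
    show "(\<integral>\<^sup>+ x. exp (l * increment t (w(t := x))) \<partial>(D \<Otimes>\<^sub>M measure_pmf q)) \<le> exp (l\<^sup>2 * pmf q k)"
      if "t < N" "w \<in> space (PiM {..<N} (\<lambda>_. D \<Otimes>\<^sub>M measure_pmf q))" for t w
      using increment_mgf_le[OF that(1) _ assms] that(2) by (simp add: epoch_space_def)
  qed
  then show ?thesis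
    by (simp add: sum_distrib_left ennreal_power exp_of_nat_mult[symmetric] mult.commute)
qed

lemma increment_sum_tail:
  assumes s: "\<bar>s\<bar> = 1" and \<epsilon>: "0 < \<epsilon>" "\<epsilon> \<le> 1"
  shows "emeasure (epoch_space N D q) {w \<in> space (epoch_space N D q). \<epsilon> * (pmf q k * N) \<le> s * (\<Sum>t<N. increment t w)}
         \<le> exp (- (\<epsilon>\<^sup>2 * (pmf q k * N) / 4))"
proof -
  let ?\<Omega> = "epoch_space N D q"
  let ?Z = "\<lambda>w. s * (\<Sum>t<N. increment t w)"
  have Z: "?Z \<in> borel_measurable ?\<Omega>"
    using increment_measurable by (intro borel_measurable_times borel_measurable_sum) auto
  have "(\<integral>\<^sup>+ w. ennreal (exp (\<epsilon> / 2 * ?Z w)) * indicator (space ?\<Omega>) w \<partial>?\<Omega>)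
      = (\<integral>\<^sup>+ w. exp (s * \<epsilon> / 2 * (\<Sum>t<N. increment t w)) \<partial>?\<Omega>)"
    by (intro nn_integral_cong) simp
  also have "\<dots> \<le> exp ((s * \<epsilon> / 2)\<^sup>2 * pmf q k * N)"
    using s \<epsilon> by (intro increment_sum_mgf_le) (simp add: abs_mult)
  also have "(s * \<epsilon> / 2)\<^sup>2 * pmf q k * N = \<epsilon>\<^sup>2 * (pmf q k * N) / 4"
    using s power2_abs[of s] by (simp add: power_mult_distrib power_divide)
  finally have mgf: "(\<integral>\<^sup>+ w. ennreal (exp (\<epsilon> / 2 * ?Z w)) * indicator (space ?\<Omega>) w \<partial>?\<Omega>)
      \<le> exp (\<epsilon>\<^sup>2 * (pmf q k * N) / 4)" .
  have "emeasure ?\<Omega> {w \<in> space ?\<Omega>. \<epsilon> * (pmf q k * N) \<le> ?Z w}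
      \<le> exp (- (\<epsilon> / 2) * (\<epsilon> * (pmf q k * N))) * (\<integral>\<^sup>+ w. ennreal (exp (\<epsilon> / 2 * ?Z w)) * indicator (space ?\<Omega>) w \<partial>?\<Omega>)"
    using \<epsilon> Z by (intro Chernoff_ineq_nn_integral_ge) (auto intro: borel_measurable_times)
  also have "\<dots> \<le> ennreal (exp (- (\<epsilon> / 2) * (\<epsilon> * (pmf q k * N)))) * ennreal (exp (\<epsilon>\<^sup>2 * (pmf q k * N) / 4))"
    using mgf by (rule mult_left_mono) simp
  also have "\<dots> = exp (- (\<epsilon>\<^sup>2 * (pmf q k * N) / 4))"
    by (simp add: ennreal_mult[symmetric] exp_add[symmetric] power2_eq_square)
  finally show ?thesis .
qed

lemma increment_sum_eq:
  "(\<Sum>t<N. increment t w) = epoch_S adv N k w - pmf q k * (\<Sum>t<N. corrupted adv t w k - fst (w t) k)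
                             - N * pmf q k * (\<integral>x. x k \<partial>D)"
proof -
  have "increment t w = (if snd (w t) = k then corrupted adv t w k else 0)
          - pmf q k * (corrupted adv t w k - fst (w t) k) - pmf q k * (\<integral>x. x k \<partial>D)" for t
    by (cases "snd (w t) = k") (simp_all add: increment_def algebra_simps)
  then show ?thesis
    by (simp add: epoch_S_def sum_subtractf flip: sum_distrib_left)
qed

lemma epoch_r_deviation_imp_increment_sum:
  assumes "k < K" "0 < N" and p: "pmf q k = nt / N" and nt: "0 < nt"
    and dev: "\<epsilon> + 2 * epoch_C adv K N w / N \<le> \<bar>epoch_r adv N nt k w - (\<integral>x. x k \<partial>D)\<bar>"
  shows "\<epsilon> * nt \<le> \<bar>\<Sum>t<N. increment t w\<bar>"
proof -
  define \<mu> where "\<mu> = (\<integral>x. x k \<partial>D)"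
  define R where "R = (\<Sum>t<N. corrupted adv t w k - fst (w t) k)"
  define C where "C = epoch_C adv K N w"
  have \<mu>: "\<mu> \<le> 1"
    using prob_space.expectation_in_unit_interval[OF prob_space_D reward_measurable reward_range]
    by (simp add: \<mu>_def)
  have RC: "\<bar>R\<bar> \<le> C"
    unfolding R_def C_def using corruption_le_epoch_C[OF assms(1)] .
  have "\<bar>epoch_r adv N nt k w - \<mu>\<bar> \<le> \<bar>epoch_S adv N k w / nt - \<mu>\<bar>"
    using \<mu> by (auto simp: epoch_r_def min_def)
  also have "epoch_S adv N k w / nt - \<mu> = ((\<Sum>t<N. increment t w) + pmf q k * R) / nt"
    using nt assms(2) by (simp add: increment_sum_eq p R_def \<mu>_def field_simps)
  also have "\<bar>\<dots>\<bar> = \<bar>(\<Sum>t<N. increment t w) + pmf q k * R\<bar> / nt"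
    using nt by simp
  also have "\<dots> \<le> (\<bar>\<Sum>t<N. increment t w\<bar> + \<bar>pmf q k * R\<bar>) / nt"
    using nt by (intro divide_right_mono abs_triangle_ineq) simp
  also have "\<dots> \<le> \<bar>\<Sum>t<N. increment t w\<bar> / nt + C / N"
  proof -
    have "\<bar>pmf q k * R\<bar> / nt \<le> C / N"
      using nt assms(2) RC by (simp add: p abs_mult divide_right_mono)
    then show ?thesis
      by (simp add: add_divide_distrib)
  qed
  finally have "\<epsilon> + C / N \<le> \<bar>\<Sum>t<N. increment t w\<bar> / nt"
    using dev by (simp add: C_def \<mu>_def)
  moreover have "0 \<le> C / N"
    using RC by simp
  ultimately have "\<epsilon> \<le> \<bar>\<Sum>t<N. increment t w\<bar> / nt"
    by linarith
  then show ?thesis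
    using nt by (simp add: field_simps)
qed

lemma epoch_r_deviation_prob_le:
  assumes "k < K" "0 < N" and p: "pmf q k = nt / N" and nt: "0 < nt" and \<epsilon>: "0 < \<epsilon>" "\<epsilon> \<le> 1"
  shows "measure (epoch_space N D q)
           {w \<in> space (epoch_space N D q).
              \<epsilon> + 2 * epoch_C adv K N w / N \<le> \<bar>epoch_r adv N nt k w - (\<integral>x. x k \<partial>D)\<bar>}
         \<le> 2 * exp (- (\<epsilon>\<^sup>2 * nt / 4))"
proof -
  let ?\<Omega> = "epoch_space N D q"
  interpret \<Omega>: prob_space ?\<Omega>
    by (rule prob_space_epoch)
  define A where "A s = {w \<in> space ?\<Omega>. \<epsilon> * nt \<le> s * (\<Sum>t<N. increment t w)}" for s :: real
  have pN: "pmf q k * N = nt"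
    using assms(2) by (simp add: p)
  have A: "A s \<in> sets ?\<Omega>" for s
    unfolding A_def using increment_measurable by measurable
  have tail: "measure ?\<Omega> (A s) \<le> exp (- (\<epsilon>\<^sup>2 * nt / 4))" if "\<bar>s\<bar> = 1" for s
    using increment_sum_tail[OF that \<epsilon>] by (simp add: A_def pN \<Omega>.emeasure_eq_measure)
  have "{w \<in> space ?\<Omega>. \<epsilon> + 2 * epoch_C adv K N w / N \<le> \<bar>epoch_r adv N nt k w - (\<integral>x. x k \<partial>D)\<bar>}
      \<subseteq> A 1 \<union> A (- 1)"
  proof
    fix w
    assume "w \<in> {w \<in> space ?\<Omega>. \<epsilon> + 2 * epoch_C adv K N w / N \<le> \<bar>epoch_r adv N nt k w - (\<integral>x. x k \<partial>D)\<bar>}"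
    then have "w \<in> space ?\<Omega>" "\<epsilon> * nt \<le> \<bar>\<Sum>t<N. increment t w\<bar>"
      using epoch_r_deviation_imp_increment_sum[OF assms(1,2) p nt] by auto
    then show "w \<in> A 1 \<union> A (- 1)"
      by (auto simp: A_def abs_if split: if_splits)
  qed
  then have "measure ?\<Omega> {w \<in> space ?\<Omega>. \<epsilon> + 2 * epoch_C adv K N w / N \<le> \<bar>epoch_r adv N nt k w - (\<integral>x. x k \<partial>D)\<bar>}
      \<le> measure ?\<Omega> (A 1 \<union> A (- 1))"
    using A by (intro \<Omega>.finite_measure_mono) auto
  also have "\<dots> \<le> measure ?\<Omega> (A 1) + measure ?\<Omega> (A (- 1))"
    using A[of 1] A[of "- 1"] by (rule measure_Un_le)
  also have "\<dots> \<le> 2 * exp (- (\<epsilon>\<^sup>2 * nt / 4))"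
    using tail[of 1] tail[of "- 1"] by simp
  finally show ?thesis .
qed

end

lemma corrupted_epochI:
  assumes "prob_space D" and "sets D = sets (PiM {..<K} (\<lambda>_. borel))"
    and "AE x in D. \<forall>j<K. x j \<in> {0..1}" and "\<forall>t h x j. j < K \<longrightarrow> adv t h x j \<in> {0..1}"
    and "\<forall>t<N. \<forall>j<K. (\<lambda>w. corrupted adv t w j) \<in> borel_measurable (epoch_space N D q)"
    and k: "k < K"
  shows "corrupted_epoch D q adv N k"
proof (rule corrupted_epoch.intro)
  show "prob_space D"
    by (rule assms(1))
  show "(\<lambda>x. x k) \<in> borel_measurable D"
    using measurable_component_singleton[of k "{..<K}" "\<lambda>_. borel"] k
    by (simp add: measurable_cong_sets[OF assms(2) refl])
  show "AE x in D. x k \<in> {0..1}"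
    using assms(3) by eventually_elim (use k in blast)
  show "adv t h x k \<in> {0..1}" for t h x
    using assms(4) k by blast
  show "(\<lambda>w. corrupted adv t w k) \<in> borel_measurable (epoch_space N D q)" if "t < N" for t
    using assms(5) that k by blast
qed

theorem lemma5:
  fixes K m :: nat
    and Delta r :: "nat \<Rightarrow> real"
    and D :: "(nat \<Rightarrow> real) measure"
    and q :: "nat pmf"
    and adv :: "nat \<Rightarrow> (nat \<Rightarrow> (nat \<Rightarrow> real) \<times> nat) \<Rightarrow> (nat \<Rightarrow> real) \<Rightarrow> (nat \<Rightarrow> real)"
    and k :: nat
  assumes K: "K \<ge> 2"
    and reach: "barbat_reach K m Delta r"
    and D_prob: "prob_space D"
    and D_sets: "sets D = sets (PiM {..<K} (\<lambda>_. borel))"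
    and D_range: "AE x in D. \<forall>j<K. x j \<in> {0..1}"
    and q_def: "\<forall>j<K. pmf q j = barbat_ntil K m Delta r j / real (barbat_N K m)"
    and adv_range: "\<forall>t h x j. j < K \<longrightarrow> adv t h x j \<in> {0..1}"
    and adv_meas: "\<forall>t<barbat_N K m. \<forall>j<K.
          (\<lambda>w. corrupted adv t w j) \<in> borel_measurable (epoch_space (barbat_N K m) D q)"
    and k: "k < K"
  shows "measure (epoch_space (barbat_N K m) D q)
           {w \<in> space (epoch_space (barbat_N K m) D q).
              \<bar>epoch_r adv (barbat_N K m) (barbat_ntil K m Delta r k) k w - integral\<^sup>L D (\<lambda>x. x k)\<bar>
                \<ge> sqrt (4 * ln (4 / barbat_beta K m) / barbat_ntil K m Delta r k)
                  + 2 * epoch_C adv K (barbat_N K m) w / real (barbat_N K m)}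
         \<le> barbat_beta K m"
proof -
  define N nt L where "N = barbat_N K m" and "nt = barbat_ntil K m Delta r k"
    and "L = ln (4 / barbat_beta K m)"
  interpret corrupted_epoch D q adv N k
    using corrupted_epochI[OF D_prob D_sets D_range adv_range _ k] adv_meas by (simp add: N_def)
  have L: "0 < L"
    using ln_four_div_barbat_beta_pos[OF K] by (simp add: L_def)
  have nt: "2 ^ 8 * L \<le> nt"
    using barbat_lambda_le_ntil[OF K barbat_reach_Delta_bounds[OF reach K] k] barbat_lambda_eq[OF K]
    by (simp add: nt_def L_def)
  define \<epsilon> where "\<epsilon> = sqrt (4 * L / nt)"
  have \<epsilon>: "0 < \<epsilon>" "\<epsilon> \<le> 1" "\<epsilon>\<^sup>2 * nt / 4 = L"
    using L nt by (simp_all add: \<epsilon>_def field_simps)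
  have "measure (epoch_space N D q)
          {w \<in> space (epoch_space N D q). \<epsilon> + 2 * epoch_C adv K N w / N \<le> \<bar>epoch_r adv N nt k w - (\<integral>x. x k \<partial>D)\<bar>}
        \<le> 2 * exp (- L)"
    using epoch_r_deviation_prob_le[OF k _ _ _ \<epsilon>(1,2), of nt] barbat_N_pos[OF K] q_def k L nt \<epsilon>(3)
    by (simp add: N_def nt_def)
  also have "2 * exp (- L) \<le> barbat_beta K m"
    using barbat_beta_pos[OF K, of m] by (simp add: L_def exp_minus)
  finally show ?thesis
    by (simp add: N_def nt_def L_def \<epsilon>_def)
qed

end
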